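(* Let $\hat\Psi\in C_0^\infty(\mathbb R^3)$ be nonnegative, not identically zero, even ($\hat\Psi(-\xi)=\hat\Psi(\xi)$), with $\operatorname{supp}\hat\Psi\subseteq\{\xi\in\mathbb R^3: 1/2<|\xi|<1,\ |\xi_1|\ge1/2\}$. For $t>0$ and $\xi=(\xi_1,\xi_2,\xi_3)$ set $\xi_t=(\xi_1,t^{1/4}\xi_2,t^{1/4}\xi_3)$. Then there exists a constant $C>0$ such that for all sufficiently large $t$, $$\big\|\mathcal F^{-1}\big[e^{t\lambda_\pm(\xi)}\hat\Psi(t^{1/2}\xi_t)\big]\big\|_{L^\infty}\ge Ct^{-2}$$ (for each choice of sign).
   Context: For $|\xi|<2$, $\lambda_\pm(\xi)=-\frac{|\xi|^2}{2}\big(1\pm i\sqrt{4/|\xi|^2-1}\big)$ (note the function $\hat\Psi(t^{1/2}\xi_t)$ is supported in $|\xi|<t^{-1/2}$ for $t\ge1$). Fourier transform convention: $\hat f(\xi)=(2\pi)^{-3/2}\int_{\mathbb R^3}e^{-ix\cdot\xi}f(x)\,dx$, $\mathcal F^{-1}[g](x)=(2\pi)^{-3/2}\int e^{ix\cdot\xi}g(\xi)\,d\xi$. *)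

theory Defs
  imports "HOL-Analysis.Analysis" "HOL-Probability.Essential_Supremum"
begin

coinductive smooth_fun :: "('a::euclidean_space \<Rightarrow> real) \<Rightarrow> bool" where
  "f differentiable_on UNIV \<Longrightarrow>
   (\<forall>b\<in>Basis. smooth_fun (\<lambda>x. frechet_derivative f (at x) b)) \<Longrightarrow> smooth_fun f"

definition tsupp :: "('a::topological_space \<Rightarrow> real) \<Rightarrow> 'a set" where
  "tsupp f = closure {x. f x \<noteq> 0}"

text \<open>Eigenvalues lambda_sigma, sigma = 1 for +, sigma = -1 for -.\<close>
definition lam :: "real \<Rightarrow> real^3 \<Rightarrow> complex" where
  "lam \<sigma> \<xi> = (if norm \<xi> < 2
     then - complex_of_real (norm \<xi> ^ 2 / 2) * (1 + complex_of_real \<sigma> * \<i> * complex_of_real (sqrt (4 / norm \<xi> ^ 2 - 1)))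
     else - complex_of_real (norm \<xi> ^ 2 / 2) * (1 + complex_of_real (\<sigma> * sqrt (1 - 4 / norm \<xi> ^ 2))))"

definition aniso :: "real \<Rightarrow> real^3 \<Rightarrow> real^3" where
  "aniso t \<xi> = vector [\<xi>$1, t powr (1/4) * \<xi>$2, t powr (1/4) * \<xi>$3]"

definition invFT :: "(real^3 \<Rightarrow> complex) \<Rightarrow> real^3 \<Rightarrow> complex" where
  "invFT g x = complex_of_real ((2 * pi) powr (-3/2)) *
     (LINT \<xi>|lborel. cis (x \<bullet> \<xi>) * g \<xi>)"

definition Linf_norm :: "(real^3 \<Rightarrow> complex) \<Rightarrow> ereal" where
  "Linf_norm f = esssup lborel (\<lambda>x. ereal (norm (f x)))"

end

theory Submission
  imports Defs
begin

text \<open>Write g(\<xi>) = exp(t \<lambda>(\<xi>)) \<Psi>(t^(1/2) \<xi>_t). On the support of g one has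
  |\<xi>_1| ~ t^(-1/2) and |\<xi>_2|, |\<xi>_3| = O(t^(-3/4)), so the damping exp(-t|\<xi>|^2/2) is bounded
  below, and for \<xi>_1 > 0 the phase t |\<xi>| sqrt(1 - |\<xi>|^2/4) of exp(t \<lambda>(\<xi>)) differs from
  t \<xi>_1 by at most 3/4. So at x_0 = \<plusminus>t e_1 + y the oscillation cancels on the half \<xi>_1 > 0 of
  the support, but not on the mirror half. Adding i times the value at
  x_1 = x_0 - (2\<pi>/3) sqrt(t) e_1 nearly annihilates the mirror half, while on the good half the
  real part stays above a fixed multiple of \<Psi>(t^(1/2) \<xi>_t). Integrating gives
  |(F^-1 g)(x_0)| + |(F^-1 g)(x_1)| > c \<integral>\<Psi>(t^(1/2) \<xi>_t) d\<xi> ~ t^(-2) for all |y| < 1/20,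
  and a function that is large at x_0 + y or at x_1 + y for every small y has a large
  essential supremum.\<close>

lemma esssup_ge_if_two_translates_ge:
  fixes f :: "'a::euclidean_space \<Rightarrow> real"
  assumes "\<rho> > 0" and ge: "\<And>y. norm y < \<rho> \<Longrightarrow> c \<le> f (a + y) \<or> c \<le> f (b + y)"
  shows "ereal c \<le> esssup lborel (\<lambda>x. ereal (f x))"
proof (rule ccontr)
  assume "\<not> ereal c \<le> esssup lborel (\<lambda>x. ereal (f x))"
  then have "esssup lborel (\<lambda>x. ereal (f x)) < ereal c" by simp
  then have "AE x in lborel. f x < c"
    using esssup_AE[of "\<lambda>x. ereal (f x)" lborel]
    by (auto elim!: eventually_mono dest: order.strict_trans1)
  then obtain N where N: "N \<in> null_sets lborel" "{x \<in> space lborel. \<not> f x < c} \<subseteq> N"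
    by (auto elim!: AE_E simp: null_sets_def)
  have "ball 0 \<rho> \<subseteq> {y. y - (- a) \<in> N} \<union> {y. y - (- b) \<in> N}"
    using ge N(2) by (fastforce simp: not_less add.commute)
  then have "ball (0::'a) \<rho> \<in> null_sets lborel"
    using null_sets_translation[OF N(1), of "- a"] null_sets_translation[OF N(1), of "- b"]
    by (auto intro: null_sets_subset)
  then have "measure lborel (ball (0::'a) \<rho>) = 0"
    by (simp add: measure_eq_0_null_sets)
  with content_ball_pos[OF \<open>\<rho> > 0\<close>, of 0] show False by simp
qed

lemma
  fixes h :: "'a::euclidean_space \<Rightarrow> 'b::{banach, second_countable_topology}"
  assumes "integrable lborel h"
  shows integrable_lborel_reflect: "integrable lborel (\<lambda>x. h (- x))"
    and integral_lborel_reflect: "integral\<^sup>L lborel (\<lambda>x. h (- x)) = integral\<^sup>L lborel h"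
proof -
  have reflect: "lborel = distr lborel borel (\<lambda>x::'a. - x)"
    using lborel_affine[of "-1" "0::'a"] by (simp add: density_1)
  have h: "h \<in> borel_measurable borel"
    using borel_measurable_integrable[OF assms] by simp
  have neg: "(\<lambda>x::'a. - x) \<in> measurable lborel borel" by simp
  show "integrable lborel (\<lambda>x. h (- x))"
    using assms integrable_distr_eq[OF neg h] reflect by (metis (no_types))
  show "integral\<^sup>L lborel (\<lambda>x. h (- x)) = integral\<^sup>L lborel h"
    using integral_distr[OF neg h] reflect by metis
qed

lemma integrable_lborel_if_vanishing_off_compact:
  fixes f :: "'a::euclidean_space \<Rightarrow> 'b::{banach, second_countable_topology}"
  assumes "compact S" "continuous_on S f" "\<And>x. x \<notin> S \<Longrightarrow> f x = 0"
  shows "integrable lborel f"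
proof -
  have "(\<lambda>x. indicator S x *\<^sub>R f x) = f"
    using assms(3) by (auto simp: indicator_def)
  with borel_integrable_compact[OF assms(1,2)] show ?thesis by simp
qed

lemma integral_ge_mult_measure:
  fixes f :: "'a::euclidean_space \<Rightarrow> real"
  assumes "integrable lborel f" "\<And>x. 0 \<le> f x" "B \<in> sets lborel" "emeasure lborel B < \<infinity>"
    and "\<And>x. x \<in> B \<Longrightarrow> m \<le> f x" "0 \<le> m"
  shows "m * measure lborel B \<le> integral\<^sup>L lborel f"
proof -
  have "integral\<^sup>L lborel (\<lambda>x. m * indicator B x) \<le> integral\<^sup>L lborel f"
    using assms by (intro integral_mono'[OF assms(1)]) (auto simp: indicator_def)
  then show ?thesis
    using assms(3,4) by (simp add: measure_def)
qed

lemma cos_ge_one_minus_sq_half: "1 - x\<^sup>2 / 2 \<le> cos (x::real)"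
proof -
  have "cos x = 1 - 2 * sin (x/2) ^ 2"
    using cos_double_sin[of "x/2"] by simp
  moreover have "sin (x/2) ^ 2 \<le> (x/2)^2"
    by (metis abs_le_square_iff abs_sin_x_le_abs_x)
  ultimately show ?thesis by (simp add: power_divide)
qed

text \<open>For u \<in> [1/2, 1] the vector i cis(2\<pi>u/3) lies within angle \<pi>/6 of -1, while
  i cis(-2\<pi>u/3) lies within \<pi>/6 of 1.\<close>

lemma interference_bound:
  fixes u \<psi> :: real
  assumes u: "1/2 \<le> u" "u \<le> 1" and \<psi>: "\<bar>\<psi>\<bar> \<le> 4/5"
  shows "1/4 \<le> Re ((1 + \<i> * cis (- (2*pi/3) * u)) * cis \<psi>) - norm (1 + \<i> * cis ((2*pi/3) * u))"
proof -
  define \<beta> where "\<beta> = pi/2 - (2*pi/3) * u"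
  have \<beta>: "\<bar>\<beta>\<bar> \<le> pi/6"
    using u by (auto simp: \<beta>_def abs_le_iff field_simps)
  have re: "Re ((1 + \<i> * cis (- (2*pi/3) * u)) * cis \<psi>) = cos \<psi> + cos (\<beta> + \<psi>)"
    by (simp add: \<beta>_def algebra_simps cos_add sin_add cos_diff sin_diff)
  have "(norm (1 + \<i> * cis ((2*pi/3) * u)))\<^sup>2 = (1 - sin ((2*pi/3) * u))\<^sup>2 + (cos ((2*pi/3) * u))\<^sup>2"
    by (simp add: cmod_def)
  also have "\<dots> = 2 - 2 * cos \<beta>"
    using sin_cos_squared_add[of "(2*pi/3) * u"]
    by (simp add: \<beta>_def cos_diff power2_eq_square algebra_simps)
  also have "\<dots> \<le> \<beta>\<^sup>2"
    using cos_ge_one_minus_sq_half[of \<beta>] by simp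
  also have "\<dots> \<le> (pi/6)\<^sup>2"
    using \<beta> abs_le_square_iff[of \<beta> "pi/6"] by simp
  finally have norm: "norm (1 + \<i> * cis ((2*pi/3) * u)) \<le> pi/6"
    by (rule power2_le_imp_le) simp
  have "\<psi>\<^sup>2 \<le> (4/5)\<^sup>2"
    using \<psi> abs_le_square_iff[of \<psi> "4/5"] by simp
  moreover have "\<bar>\<beta> + \<psi>\<bar> \<le> pi/6 + 4/5"
    using \<beta> \<psi> abs_triangle_ineq[of \<beta> \<psi>] by linarith
  then have "(\<beta> + \<psi>)\<^sup>2 \<le> (pi/6 + 4/5)\<^sup>2"
    using abs_le_square_iff[of "\<beta> + \<psi>" "pi/6 + 4/5"] pi_gt_zero by simp
  moreover have "(pi/6 + 4/5)\<^sup>2 \<le> (3.1416/6 + 4/5)\<^sup>2"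
    using pi_approx by (intro power_mono) auto
  ultimately have "1/4 \<le> cos \<psi> + cos (\<beta> + \<psi>) - pi/6"
    using cos_ge_one_minus_sq_half[of \<psi>] cos_ge_one_minus_sq_half[of "\<beta> + \<psi>"] pi_approx
    by (simp add: power2_eq_square)
  then show ?thesis
    using re norm by linarith
qed

lemma half_sq_mult_sqrt_eq:
  fixes r :: real
  assumes "0 < r"
  shows "r\<^sup>2 / 2 * sqrt (4 / r\<^sup>2 - 1) = r * sqrt (1 - r\<^sup>2 / 4)"
proof -
  have "4 / r\<^sup>2 - 1 = (2 / r)\<^sup>2 * (1 - r\<^sup>2 / 4)"
    using assms by (simp add: field_simps power2_eq_square)
  then have "sqrt (4 / r\<^sup>2 - 1) = 2 / r * sqrt (1 - r\<^sup>2 / 4)"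
    using assms by (simp add: real_sqrt_mult)
  then show ?thesis
    using assms by (simp add: power2_eq_square)
qed

lemma phase_error_bound:
  fixes T a r :: real
  assumes T: "1 \<le> T" and a: "0 < a" "1/2 \<le> T * a" "a \<le> r"
    and small: "T\<^sup>2 * a\<^sup>2 + T^3 * (r\<^sup>2 - a\<^sup>2) < 1"
  shows "\<bar>T\<^sup>2 * a - T\<^sup>2 * (r * sqrt (1 - r\<^sup>2 / 4))\<bar> \<le> 3/4"
proof -
  have q: "0 \<le> r\<^sup>2 - a\<^sup>2"
    using a by (simp add: power_mono)
  have "T\<^sup>2 * (r\<^sup>2 - a\<^sup>2) \<le> T^3 * (r\<^sup>2 - a\<^sup>2)"
    using T q by (intro mult_right_mono power_increasing) auto
  then have Tr: "T\<^sup>2 * r\<^sup>2 < 1"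
    using small by (simp add: algebra_simps)
  then have r: "0 < r" "r < 1"
    using T a by (auto simp: power2_eq_square) (smt (verit) mult_le_cancel_right1 mult_mono)
  have s0: "0 \<le> 1 - r\<^sup>2 / 4" "1 - r\<^sup>2 / 4 \<le> 1"
    using r mult_le_one[of r r] by (auto simp: power2_eq_square)
  then have s: "1 - r\<^sup>2 / 4 \<le> sqrt (1 - r\<^sup>2 / 4)" "sqrt (1 - r\<^sup>2 / 4) \<le> 1"
    by (auto intro!: real_le_rsqrt simp: power2_eq_square mult_right_le_one_le)
  have "T\<^sup>2 * a - T\<^sup>2 * (r * sqrt (1 - r\<^sup>2 / 4)) \<le> T\<^sup>2 * r - T\<^sup>2 * (r * (1 - r\<^sup>2 / 4))"
    using a s(1) r by (intro diff_mono mult_left_mono) auto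
  also have "\<dots> = (T\<^sup>2 * r\<^sup>2) * r / 4"
    by (simp add: algebra_simps power2_eq_square)
  also have "\<dots> \<le> 1/4"
    using Tr r mult_le_one[of "T\<^sup>2 * r\<^sup>2" r] by simp
  finally have upper: "T\<^sup>2 * a - T\<^sup>2 * (r * sqrt (1 - r\<^sup>2 / 4)) \<le> 1/4" .
  \<comment> \<open>r - a is controlled by the transverse part r^2 - a^2 = (r - a)(r + a) \<ge> 2a(r - a).\<close>
  define u where "u = T * a"
  have "T * (T\<^sup>2 * (r - a) * (2 * a)) \<le> T * (T\<^sup>2 * (r - a) * (r + a))"
    using T a by (intro mult_left_mono) auto
  then have "2 * u * (T\<^sup>2 * (r - a)) \<le> T^3 * (r\<^sup>2 - a\<^sup>2)"
    by (simp add: u_def power2_eq_square power3_eq_cube algebra_simps)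
  also have "\<dots> < 1 - u\<^sup>2"
    using small by (simp add: u_def power_mult_distrib)
  also have "\<dots> \<le> 2 * u * (3/4)"
  proof -
    have "0 \<le> (2 * u - 1) * (u + 2)"
      using a(2) by (simp add: u_def)
    then show ?thesis
      by (simp add: algebra_simps power2_eq_square)
  qed
  finally have "2 * u * (T\<^sup>2 * (r - a)) < 2 * u * (3/4)" .
  then have "T\<^sup>2 * (r - a) < 3/4"
    using a(2) by (subst (asm) mult_less_cancel_left_pos) (auto simp: u_def)
  then have lower: "- (3/4) \<le> T\<^sup>2 * a - T\<^sup>2 * (r * sqrt (1 - r\<^sup>2 / 4))"
    using s(2) r T by (smt (verit) mult_left_mono mult_right_le_one_le right_diff_distrib zero_le_power2)
  show ?thesis
    using upper lower by linarith
qed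

lemma smooth_fun_imp_continuous: "smooth_fun f \<Longrightarrow> continuous_on UNIV f"
  by (erule smooth_fun.cases) (auto intro: differentiable_imp_continuous_on)

lemma norm_vec3_sq: "(norm (x::real^3))\<^sup>2 = (x$1)\<^sup>2 + (x$2)\<^sup>2 + (x$3)\<^sup>2"
  unfolding norm_vec_def L2_set_def sum_3 by simp

definition aniso_factor :: "real \<Rightarrow> 3 \<Rightarrow> real" where
  "aniso_factor t i = (if i = 1 then sqrt t else sqrt t * t powr (1/4))"

lemma sqrt_scaleR_aniso: "sqrt t *\<^sub>R aniso t \<xi> = (\<chi> i. aniso_factor t i * \<xi>$i)"
  unfolding vec_eq_iff
proof
  fix i :: 3
  show "(sqrt t *\<^sub>R aniso t \<xi>) $ i = (\<chi> i. aniso_factor t i * \<xi>$i) $ i"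
    using exhaust_3[of i] by (auto simp: aniso_def aniso_factor_def)
qed

lemma aniso_uminus: "aniso t (- \<xi>) = - aniso t \<xi>"
  unfolding aniso_def by (simp add: vec_eq_iff forall_3 vector_3)

lemma aniso_factor_ge_one: "1 \<le> t \<Longrightarrow> 1 \<le> aniso_factor t i"
  using mult_mono[of 1 "sqrt t" 1 "t powr (1/4)"] by (auto simp: aniso_factor_def ge_one_powr_ge_zero)

lemma transverse_factor_sq:
  assumes "0 < t"
  shows "(sqrt t * t powr (1/4))\<^sup>2 = sqrt t ^ 3"
proof -
  have "(sqrt t * t powr (1/4))\<^sup>2 = (sqrt t)\<^sup>2 * (t powr (1/4))\<^sup>2"
    by (rule power_mult_distrib)
  also have "(t powr (1/4))\<^sup>2 = sqrt t"
    using assms by (simp add: power2_eq_square powr_add[symmetric] powr_half_sqrt)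
  finally show ?thesis
    by (simp only: power2_eq_square power3_eq_cube mult.assoc)
qed

lemma prod_aniso_factor:
  assumes "0 < t"
  shows "(\<Prod>i\<in>UNIV. aniso_factor t i) = t\<^sup>2"
proof -
  have "(\<Prod>i\<in>UNIV. aniso_factor t i) = aniso_factor t 1 * aniso_factor t 2 * aniso_factor t 3"
    unfolding UNIV_3 by (simp add: ac_simps)
  also have "\<dots> = sqrt t * (sqrt t * t powr (1/4))\<^sup>2"
    by (simp add: aniso_factor_def power2_eq_square)
  also have "\<dots> = (sqrt t)\<^sup>2 * (sqrt t)\<^sup>2"
    unfolding transverse_factor_sq[OF assms] by (simp only: power2_eq_square power3_eq_cube)
  finally show ?thesis
    using assms by (simp add: power2_eq_square)
qed

lemma norm_le_norm_sqrt_scaleR_aniso: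
  assumes "1 \<le> t"
  shows "norm \<xi> \<le> norm (sqrt t *\<^sub>R aniso t \<xi>)"
proof (rule power2_le_imp_le)
  have "(\<xi>$i)\<^sup>2 \<le> (aniso_factor t i * \<xi>$i)\<^sup>2" for i
    using aniso_factor_ge_one[OF assms, of i]
    by (simp add: power_mult_distrib one_le_power mult_le_cancel_right1)
  then show "(norm \<xi>)\<^sup>2 \<le> (norm (sqrt t *\<^sub>R aniso t \<xi>))\<^sup>2"
    unfolding sqrt_scaleR_aniso norm_vec3_sq by (simp add: add_mono)
qed simp

lemma measure_rescaled_box:
  assumes "1 \<le> t" "0 < d"
  shows "measure lborel (cbox (\<chi> i. (c$i - d) / aniso_factor t i) (\<chi> i. (c$i + d) / aniso_factor t i))
    = (2 * d) ^ 3 * t powr (-2)"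
proof -
  have f: "0 < aniso_factor t i" for i
    using aniso_factor_ge_one[OF assms(1), of i] by simp
  let ?lo = "\<chi> i. (c$i - d) / aniso_factor t i" and ?hi = "\<chi> i. (c$i + d) / aniso_factor t i"
  have "?lo \<in> cbox ?lo ?hi"
    using f assms(2) by (auto simp: mem_box_cart less_imp_le intro!: divide_right_mono)
  then have "measure lborel (cbox ?lo ?hi) = (\<Prod>i\<in>UNIV. 2 * d / aniso_factor t i)"
    by (subst content_cbox_cart) (auto simp: diff_divide_distrib[symmetric])
  also have "\<dots> = (2 * d) ^ 3 / t\<^sup>2"
    using assms(1) by (simp add: prod_dividef prod_aniso_factor)
  finally show ?thesis
    using assms(1) by (simp add: powr_minus powr_realpow divide_inverse)
qed

lemma sqrt_scaleR_aniso_rescaled_box_dist: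
  assumes "1 \<le> t"
    and "\<xi> \<in> cbox (\<chi> i. (c$i - d) / aniso_factor t i) (\<chi> i. (c$i + d) / aniso_factor t i)"
  shows "norm (sqrt t *\<^sub>R aniso t \<xi> - c) \<le> 3 * d"
proof -
  have coord: "\<bar>(sqrt t *\<^sub>R aniso t \<xi> - c)$i\<bar> \<le> d" for i
  proof -
    have "0 < aniso_factor t i"
      using aniso_factor_ge_one[OF assms(1), of i] by simp
    moreover have "(c$i - d) / aniso_factor t i \<le> \<xi>$i" "\<xi>$i \<le> (c$i + d) / aniso_factor t i"
      using assms(2) by (auto simp: mem_box_cart)
    ultimately show ?thesis
      by (simp add: sqrt_scaleR_aniso abs_le_iff pos_divide_le_eq pos_le_divide_eq mult.commute)
  qed
  show ?thesis
    using norm_le_l1_cart[of "sqrt t *\<^sub>R aniso t \<xi> - c"] coord[of 1] coord[of 2] coord[of 3]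
    unfolding sum_3 by linarith
qed

lemma lam_uminus: "lam \<sigma> (- \<xi>) = lam \<sigma> \<xi>"
  by (simp add: lam_def)

lemma exp_mult_lam_polar:
  assumes "0 < norm \<xi>" "norm \<xi> < 2"
  shows "exp (complex_of_real t * lam \<sigma> \<xi>) = complex_of_real (exp (- (t * (norm \<xi>)\<^sup>2 / 2))) *
    cis (- (\<sigma> * t * (norm \<xi> * sqrt (1 - (norm \<xi>)\<^sup>2 / 4))))"
proof -
  let ?A = "- (t * (norm \<xi>)\<^sup>2 / 2)"
  have "complex_of_real t * lam \<sigma> \<xi> =
      complex_of_real ?A + \<i> * complex_of_real (- (\<sigma> * t * ((norm \<xi>)\<^sup>2 / 2 * sqrt (4 / (norm \<xi>)\<^sup>2 - 1))))"
    using assms unfolding lam_def by (simp add: algebra_simps)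
  then have "complex_of_real t * lam \<sigma> \<xi> =
      complex_of_real ?A + \<i> * complex_of_real (- (\<sigma> * t * (norm \<xi> * sqrt (1 - (norm \<xi>)\<^sup>2 / 4))))"
    by (simp only: half_sq_mult_sqrt_eq[OF assms(1)])
  then show ?thesis
    by (simp only: exp_add cis_conv_exp exp_of_real)
qed

definition probe_point :: "real \<Rightarrow> real \<Rightarrow> real \<Rightarrow> real^3" where
  "probe_point \<sigma> t s = (\<sigma> * t - s * sqrt t) *\<^sub>R axis 1 1"

locale annular_bump =
  fixes Psi :: "real^3 \<Rightarrow> real"
  assumes continuous: "continuous_on UNIV Psi"
    and nonneg: "\<And>\<xi>. 0 \<le> Psi \<xi>"
    and nonzero: "\<exists>\<xi>. Psi \<xi> \<noteq> 0"
    and even: "\<And>\<xi>. Psi (- \<xi>) = Psi \<xi>"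
    and tsupp_subset: "tsupp Psi \<subseteq> {\<xi>. 1/2 < norm \<xi> \<and> norm \<xi> < 1 \<and> \<bar>\<xi>$1\<bar> \<ge> 1/2}"
begin

definition Psi_t :: "real \<Rightarrow> real^3 \<Rightarrow> real" where
  "Psi_t t \<xi> = Psi (sqrt t *\<^sub>R aniso t \<xi>)"

definition multiplier :: "real \<Rightarrow> real \<Rightarrow> real^3 \<Rightarrow> complex" where
  "multiplier \<sigma> t \<xi> = exp (complex_of_real t * lam \<sigma> \<xi>) * complex_of_real (Psi_t t \<xi>)"

lemma Psi_t_uminus: "Psi_t t (- \<xi>) = Psi_t t \<xi>"
  using even by (simp add: Psi_t_def aniso_uminus)

lemma multiplier_uminus: "multiplier \<sigma> t (- \<xi>) = multiplier \<sigma> t \<xi>"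
  by (simp add: multiplier_def Psi_t_uminus lam_uminus)

lemma continuous_on_Psi_t: "continuous_on UNIV (Psi_t t)"
  unfolding Psi_t_def sqrt_scaleR_aniso
  by (rule continuous_on_compose2[OF continuous]) (auto intro!: continuous_intros)

lemma rescaled_tsupp_norm_bounds:
  assumes "1 \<le> t" "sqrt t *\<^sub>R aniso t \<xi> \<in> tsupp Psi"
  shows "0 < norm \<xi>" "norm \<xi> < 1"
proof -
  have "1/2 < norm (sqrt t *\<^sub>R aniso t \<xi>)" "norm (sqrt t *\<^sub>R aniso t \<xi>) < 1"
    using assms(2) tsupp_subset by auto
  moreover have "sqrt t *\<^sub>R aniso t 0 = 0"
    by (simp add: sqrt_scaleR_aniso vec_eq_iff)
  ultimately show "0 < norm \<xi>" "norm \<xi> < 1"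
    using norm_le_norm_sqrt_scaleR_aniso[OF assms(1), of \<xi>] by (cases "\<xi> = 0", auto)
qed

lemma Psi_t_eq_0_off_rescaled_tsupp: "sqrt t *\<^sub>R aniso t \<xi> \<notin> tsupp Psi \<Longrightarrow> Psi_t t \<xi> = 0"
  unfolding Psi_t_def tsupp_def by (metis (mono_tags) closure_subset mem_Collect_eq subsetD)

lemma compact_rescaled_tsupp:
  assumes "1 \<le> t"
  shows "compact {\<xi>. sqrt t *\<^sub>R aniso t \<xi> \<in> tsupp Psi}"
  unfolding compact_eq_bounded_closed
proof
  have "{\<xi>. sqrt t *\<^sub>R aniso t \<xi> \<in> tsupp Psi} \<subseteq> cball 0 1"
    by (auto dest: rescaled_tsupp_norm_bounds(2)[OF assms])
  then show "bounded {\<xi>. sqrt t *\<^sub>R aniso t \<xi> \<in> tsupp Psi}"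
    by (rule bounded_subset[OF bounded_cball])
  have "continuous_on UNIV (\<lambda>\<xi>. sqrt t *\<^sub>R aniso t \<xi>)"
    unfolding sqrt_scaleR_aniso by (intro continuous_intros)
  then have "closed (UNIV \<inter> (\<lambda>\<xi>. sqrt t *\<^sub>R aniso t \<xi>) -` tsupp Psi)"
    unfolding tsupp_def by (rule continuous_closed_preimage) simp_all
  then show "closed {\<xi>. sqrt t *\<^sub>R aniso t \<xi> \<in> tsupp Psi}"
    by (simp add: vimage_def)
qed

lemma integrable_Psi_t: "1 \<le> t \<Longrightarrow> integrable lborel (Psi_t t)"
  by (rule integrable_lborel_if_vanishing_off_compact[OF compact_rescaled_tsupp])
     (auto intro: continuous_on_subset[OF continuous_on_Psi_t] Psi_t_eq_0_off_rescaled_tsupp)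

lemma integrable_Fourier_integrand:
  assumes "1 \<le> t"
  shows "integrable lborel (\<lambda>\<xi>. cis (x \<bullet> \<xi>) * multiplier \<sigma> t \<xi>)"
proof (rule integrable_lborel_if_vanishing_off_compact[OF compact_rescaled_tsupp[OF assms]])
  let ?S = "{\<xi>. sqrt t *\<^sub>R aniso t \<xi> \<in> tsupp Psi}"
  let ?lam = "\<lambda>\<xi>. - complex_of_real ((norm \<xi>)\<^sup>2 / 2) *
    (1 + complex_of_real \<sigma> * \<i> * complex_of_real (sqrt (4 / (norm \<xi>)\<^sup>2 - 1)))"
  have cont: "continuous_on ?S (\<lambda>\<xi>. cis (x \<bullet> \<xi>) * (exp (complex_of_real t * ?lam \<xi>) * complex_of_real (Psi_t t \<xi>)))"
    using rescaled_tsupp_norm_bounds[OF assms]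
    by (intro continuous_intros continuous_on_subset[OF continuous_on_Psi_t]) auto
  have "lam \<sigma> \<xi> = ?lam \<xi>" if "\<xi> \<in> ?S" for \<xi>
  proof -
    have "norm \<xi> < 2"
      using rescaled_tsupp_norm_bounds(2)[OF assms] that by fastforce
    then show ?thesis by (simp add: lam_def)
  qed
  then show "continuous_on ?S (\<lambda>\<xi>. cis (x \<bullet> \<xi>) * multiplier \<sigma> t \<xi>)"
    unfolding multiplier_def by (auto intro: continuous_on_eq[OF cont])
qed (simp add: multiplier_def Psi_t_eq_0_off_rescaled_tsupp)

lemma integral_Psi_t_lower_bound: "\<exists>c>0. \<forall>t\<ge>1. c * t powr (-2) \<le> integral\<^sup>L lborel (Psi_t t)"
proof -
  obtain \<xi>\<^sub>0 where "Psi \<xi>\<^sub>0 \<noteq> 0"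
    using nonzero by blast
  then have "0 < Psi \<xi>\<^sub>0 / 2"
    using nonneg[of \<xi>\<^sub>0] by simp
  then obtain \<delta> where "0 < \<delta>" and \<delta>: "\<And>\<xi>. dist \<xi> \<xi>\<^sub>0 < \<delta> \<Longrightarrow> dist (Psi \<xi>) (Psi \<xi>\<^sub>0) < Psi \<xi>\<^sub>0 / 2"
    using continuous unfolding continuous_on_iff by (metis UNIV_I)
  define d where "d = \<delta> / 4"
  have d: "0 < d"
    using \<open>0 < \<delta>\<close> by (simp add: d_def)
  have "Psi \<xi>\<^sub>0 / 2 * (2 * d) ^ 3 * t powr (-2) \<le> integral\<^sup>L lborel (Psi_t t)" if t: "1 \<le> t" for t
  proof -
    let ?B = "cbox (\<chi> i. (\<xi>\<^sub>0$i - d) / aniso_factor t i) (\<chi> i. (\<xi>\<^sub>0$i + d) / aniso_factor t i)"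
    have "Psi \<xi>\<^sub>0 / 2 \<le> Psi_t t \<xi>" if "\<xi> \<in> ?B" for \<xi>
    proof -
      have "dist (Psi (sqrt t *\<^sub>R aniso t \<xi>)) (Psi \<xi>\<^sub>0) < Psi \<xi>\<^sub>0 / 2"
        using sqrt_scaleR_aniso_rescaled_box_dist[OF t that] d by (intro \<delta>) (simp add: dist_norm d_def)
      then show ?thesis
        unfolding Psi_t_def dist_real_def by linarith
    qed
    then have "Psi \<xi>\<^sub>0 / 2 * measure lborel ?B \<le> integral\<^sup>L lborel (Psi_t t)"
      using \<open>0 < Psi \<xi>\<^sub>0 / 2\<close>
      by (intro integral_ge_mult_measure integrable_Psi_t t emeasure_lborel_cbox_finite)
         (auto simp: Psi_t_def nonneg)
    then show ?thesis
      using measure_rescaled_box[OF t d] by (simp add: mult.assoc)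
  qed
  then show ?thesis
    using \<open>0 < Psi \<xi>\<^sub>0 / 2\<close> d by (intro exI[of _ "Psi \<xi>\<^sub>0 / 2 * (2 * d) ^ 3"]) auto
qed

lemma Psi_t_nonzero_bounds:
  assumes t: "1 \<le> t" and nz: "Psi_t t \<xi> \<noteq> 0"
  shows "(sqrt t)\<^sup>2 * (\<xi>$1)\<^sup>2 + sqrt t ^ 3 * ((norm \<xi>)\<^sup>2 - (\<xi>$1)\<^sup>2) < 1"
    and "1/2 \<le> sqrt t * \<bar>\<xi>$1\<bar>" "sqrt t * \<bar>\<xi>$1\<bar> < 1"
    and "t * (norm \<xi>)\<^sup>2 < 1"
    and "0 < norm \<xi>" "norm \<xi> < 1"
proof -
  let ?\<eta> = "sqrt t *\<^sub>R aniso t \<xi>"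
  have supp: "?\<eta> \<in> tsupp Psi"
    using nz Psi_t_eq_0_off_rescaled_tsupp by blast
  then show "0 < norm \<xi>" "norm \<xi> < 1"
    using rescaled_tsupp_norm_bounds[OF t] by auto
  have \<eta>: "norm ?\<eta> < 1" "1/2 \<le> \<bar>?\<eta>$1\<bar>"
    using supp tsupp_subset by auto
  have coord: "?\<eta>$1 = sqrt t * \<xi>$1" "?\<eta>$2 = (sqrt t * t powr (1/4)) * \<xi>$2"
    "?\<eta>$3 = (sqrt t * t powr (1/4)) * \<xi>$3"
    by (simp_all add: sqrt_scaleR_aniso aniso_factor_def)
  have "(norm ?\<eta>)\<^sup>2 < 1"
    using \<eta>(1) by (simp add: power_less_one_iff)
  then have "(sqrt t)\<^sup>2 * (\<xi>$1)\<^sup>2 + (sqrt t * t powr (1/4))\<^sup>2 * ((\<xi>$2)\<^sup>2 + (\<xi>$3)\<^sup>2) < 1"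
    unfolding norm_vec3_sq[of ?\<eta>] coord by (simp add: power_mult_distrib algebra_simps)
  then show small: "(sqrt t)\<^sup>2 * (\<xi>$1)\<^sup>2 + sqrt t ^ 3 * ((norm \<xi>)\<^sup>2 - (\<xi>$1)\<^sup>2) < 1"
    using t by (simp add: transverse_factor_sq norm_vec3_sq)
  have "\<bar>?\<eta>$1\<bar> < 1"
    using component_le_norm_cart[of ?\<eta> 1] \<eta>(1) by linarith
  then show "1/2 \<le> sqrt t * \<bar>\<xi>$1\<bar>" "sqrt t * \<bar>\<xi>$1\<bar> < 1"
    using \<eta>(2) t unfolding coord(1) by (simp_all add: abs_mult)
  have "t * ((norm \<xi>)\<^sup>2 - (\<xi>$1)\<^sup>2) \<le> sqrt t ^ 3 * ((norm \<xi>)\<^sup>2 - (\<xi>$1)\<^sup>2)"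
  proof (rule mult_right_mono)
    show "t \<le> sqrt t ^ 3"
      using t by (simp add: power3_eq_cube)
    show "0 \<le> (norm \<xi>)\<^sup>2 - (\<xi>$1)\<^sup>2"
      using component_le_norm_cart[of \<xi> 1] abs_le_square_iff[of "\<xi>$1" "norm \<xi>"] by simp
  qed
  then show "t * (norm \<xi>)\<^sup>2 < 1"
    using small t by (simp add: algebra_simps)
qed

definition interference :: "real \<Rightarrow> real \<Rightarrow> real^3 \<Rightarrow> real^3 \<Rightarrow> complex" where
  "interference \<sigma> t y \<xi> = multiplier \<sigma> t \<xi> *
     (cis ((probe_point \<sigma> t 0 + y) \<bullet> \<xi>) + \<i> * cis ((probe_point \<sigma> t (2*pi/3) + y) \<bullet> \<xi>))"

lemma interference_factorization:
  fixes y :: "real^3"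
  assumes mult: "multiplier \<sigma> t \<xi> = complex_of_real m * cis (- (\<sigma> * \<Phi>))" and "0 \<le> m"
  defines "u \<equiv> sqrt t * \<xi>$1" and "\<psi> \<equiv> \<sigma> * (t * \<xi>$1 - \<Phi>) + y \<bullet> \<xi>"
  shows "Re (interference \<sigma> t y \<xi>) = m * Re ((1 + \<i> * cis (- (2*pi/3) * u)) * cis \<psi>)"
    and "norm (interference \<sigma> t y (- \<xi>)) = m * norm (1 + \<i> * cis ((2*pi/3) * u))"
proof -
  define \<theta> where "\<theta> = \<sigma> * t * \<xi>$1 + y \<bullet> \<xi>"
  have x0: "(probe_point \<sigma> t 0 + y) \<bullet> \<xi> = \<theta>"
    by (simp add: probe_point_def inner_add_left inner_axis' \<theta>_def)
  have x1: "(probe_point \<sigma> t (2*pi/3) + y) \<bullet> \<xi> = \<theta> + (- (2*pi/3) * u)"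
    by (simp add: probe_point_def inner_add_left inner_axis' u_def \<theta>_def algebra_simps)
  have "interference \<sigma> t y \<xi> =
      complex_of_real m * (cis (- (\<sigma> * \<Phi>)) * cis \<theta> * (1 + \<i> * cis (- (2*pi/3) * u)))"
    unfolding interference_def mult x0 x1 cis_mult[symmetric] by (simp add: algebra_simps)
  also have "cis (- (\<sigma> * \<Phi>)) * cis \<theta> = cis \<psi>"
    unfolding cis_mult \<psi>_def \<theta>_def by (simp add: algebra_simps)
  finally show "Re (interference \<sigma> t y \<xi>) = m * Re ((1 + \<i> * cis (- (2*pi/3) * u)) * cis \<psi>)"
    by (simp add: mult.commute)
  have "interference \<sigma> t y (- \<xi>) =
      complex_of_real m * (cis (- (\<sigma> * \<Phi>)) * cis (- \<theta>) * (1 + \<i> * cis ((2*pi/3) * u)))"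
    unfolding interference_def multiplier_uminus mult inner_minus_right x0 x1
    by (simp add: cis_mult algebra_simps)
  then show "norm (interference \<sigma> t y (- \<xi>)) = m * norm (1 + \<i> * cis ((2*pi/3) * u))"
    using \<open>0 \<le> m\<close> by (simp add: norm_mult)
qed

lemma Re_interference_ge:
  assumes t: "1 \<le> t" and \<sigma>: "\<sigma> \<in> {1, -1}" and y: "norm y \<le> 1/20"
    and nz: "Psi_t t \<xi> \<noteq> 0" and pos: "0 < \<xi>$1"
  shows "exp (-1/2) / 4 * Psi_t t \<xi> \<le> Re (interference \<sigma> t y \<xi>) - norm (interference \<sigma> t y (- \<xi>))"
proof -
  define a r where "a = \<xi>$1" and "r = norm \<xi>"
  note bounds = Psi_t_nonzero_bounds[OF t nz, folded a_def r_def]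
  define \<Phi> where "\<Phi> = t * (r * sqrt (1 - r\<^sup>2 / 4))"
  have phase: "\<bar>t * a - \<Phi>\<bar> \<le> 3/4"
    using phase_error_bound[of "sqrt t" a r] t pos bounds(1,2) component_le_norm_cart[of \<xi> 1]
    by (simp add: a_def r_def \<Phi>_def)
  have u: "1/2 \<le> sqrt t * a" "sqrt t * a \<le> 1"
    using bounds(2,3) pos by (simp_all add: a_def)
  define m where "m = exp (- (t * r\<^sup>2 / 2)) * Psi_t t \<xi>"
  have "0 \<le> m"
    using nonneg by (simp add: m_def Psi_t_def)
  have "multiplier \<sigma> t \<xi> = complex_of_real m * cis (- (\<sigma> * \<Phi>))"
    using exp_mult_lam_polar[of \<xi> t \<sigma>] bounds(5,6)
    by (simp add: multiplier_def m_def \<Phi>_def r_def mult.assoc)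
  note factor = interference_factorization[OF this \<open>0 \<le> m\<close>, of y, folded a_def]
  have "\<bar>y \<bullet> \<xi>\<bar> \<le> norm y * norm \<xi>"
    by (rule Cauchy_Schwarz_ineq2)
  also have "\<dots> \<le> 1/20"
    using y bounds(6) mult_mono[of "norm y" "1/20" "norm \<xi>" 1] by (simp add: r_def)
  finally have "\<bar>y \<bullet> \<xi>\<bar> \<le> 1/20" .
  moreover have "\<bar>\<sigma> * (t * a - \<Phi>)\<bar> \<le> 3/4"
    using \<sigma> phase by (auto simp: abs_minus_commute)
  ultimately have "\<bar>\<sigma> * (t * a - \<Phi>) + y \<bullet> \<xi>\<bar> \<le> 4/5"
    by linarith
  then have "m * (1/4) \<le> Re (interference \<sigma> t y \<xi>) - norm (interference \<sigma> t y (- \<xi>))"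
    unfolding factor right_diff_distrib[symmetric] using interference_bound[OF u] \<open>0 \<le> m\<close>
    by (intro mult_left_mono) auto
  moreover have "exp (-1/2) / 4 * Psi_t t \<xi> \<le> m * (1/4)"
    using bounds(4) nonneg by (simp add: m_def Psi_t_def mult_right_mono)
  ultimately show ?thesis
    by linarith
qed

lemma Re_interference_symmetric_ge:
  assumes t: "1 \<le> t" and \<sigma>: "\<sigma> \<in> {1, -1}" and y: "norm y \<le> 1/20"
  shows "exp (-1/2) / 4 * Psi_t t \<xi> \<le> Re (interference \<sigma> t y \<xi> + interference \<sigma> t y (- \<xi>))"
proof (cases "Psi_t t \<xi> = 0")
  case True
  then show ?thesis
    by (simp add: interference_def multiplier_def Psi_t_uminus)
next
  case False
  have Re_ge: "- norm (interference \<sigma> t y \<zeta>) \<le> Re (interference \<sigma> t y \<zeta>)" for \<zeta>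
    using abs_Re_le_cmod[of "interference \<sigma> t y \<zeta>"] by linarith
  have "\<xi>$1 \<noteq> 0"
    using Psi_t_nonzero_bounds(2)[OF t False] by auto
  then consider "0 < \<xi>$1" | "0 < (- \<xi>)$1"
    by fastforce
  then show ?thesis
  proof cases
    case 1
    then show ?thesis
      using Re_interference_ge[OF t \<sigma> y False 1] Re_ge[of "- \<xi>"] by simp
  next
    case 2
    have "Psi_t t (- \<xi>) \<noteq> 0"
      using False by (simp add: Psi_t_uminus)
    then show ?thesis
      using Re_interference_ge[OF t \<sigma> y _ 2] Re_ge[of \<xi>] by (simp add: Psi_t_uminus)
  qed
qed

lemma norm_invFT_probe_points_ge:
  assumes t: "1 \<le> t" and \<sigma>: "\<sigma> \<in> {1, -1}" and y: "norm y \<le> 1/20"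
  shows "(2 * pi) powr (-3/2) * exp (-1/2) / 8 * integral\<^sup>L lborel (Psi_t t) \<le>
    norm (invFT (multiplier \<sigma> t) (probe_point \<sigma> t 0 + y)) +
    norm (invFT (multiplier \<sigma> t) (probe_point \<sigma> t (2*pi/3) + y))"
proof -
  define I where "I s = (LINT \<xi>|lborel. cis ((probe_point \<sigma> t s + y) \<bullet> \<xi>) * multiplier \<sigma> t \<xi>)" for s
  let ?H = "interference \<sigma> t y"
  have H: "?H = (\<lambda>\<xi>. cis ((probe_point \<sigma> t 0 + y) \<bullet> \<xi>) * multiplier \<sigma> t \<xi> +
      \<i> * (cis ((probe_point \<sigma> t (2*pi/3) + y) \<bullet> \<xi>) * multiplier \<sigma> t \<xi>))"
    by (auto simp: interference_def algebra_simps)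
  have int_H: "integrable lborel ?H"
    unfolding H using integrable_Fourier_integrand[OF t] by simp
  have "integral\<^sup>L lborel ?H = I 0 + \<i> * I (2*pi/3)"
    unfolding H I_def using integrable_Fourier_integrand[OF t] by simp
  then have int_sym: "integral\<^sup>L lborel (\<lambda>\<xi>. ?H \<xi> + ?H (- \<xi>)) = 2 * (I 0 + \<i> * I (2*pi/3))"
    using int_H integrable_lborel_reflect[OF int_H] integral_lborel_reflect[OF int_H] by simp
  have "exp (-1/2) / 4 * integral\<^sup>L lborel (Psi_t t) = integral\<^sup>L lborel (\<lambda>\<xi>. exp (-1/2) / 4 * Psi_t t \<xi>)"
    by simp
  also have "\<dots> \<le> integral\<^sup>L lborel (\<lambda>\<xi>. Re (?H \<xi> + ?H (- \<xi>)))"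
    using integrable_Psi_t[OF t] int_H integrable_lborel_reflect[OF int_H] Re_interference_symmetric_ge[OF t \<sigma> y]
    by (intro integral_mono) auto
  also have "\<dots> = Re (integral\<^sup>L lborel (\<lambda>\<xi>. ?H \<xi> + ?H (- \<xi>)))"
    by (intro integral_Re Bochner_Integration.integrable_add int_H integrable_lborel_reflect)
  also have "\<dots> = 2 * Re (I 0 + \<i> * I (2*pi/3))"
    by (simp only: int_sym) simp
  also have "\<dots> \<le> 2 * (norm (I 0) + norm (I (2*pi/3)))"
    using complex_Re_le_cmod[of "I 0 + \<i> * I (2*pi/3)"] norm_triangle_ineq[of "I 0" "\<i> * I (2*pi/3)"]
    by (simp add: norm_mult)
  finally have "exp (-1/2) / 8 * integral\<^sup>L lborel (Psi_t t) \<le> norm (I 0) + norm (I (2*pi/3))"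
    by simp
  then show ?thesis
    unfolding invFT_def I_def norm_mult distrib_left[symmetric] by (simp add: mult.assoc)
qed

lemma invFT_multiplier_lower_bound:
  assumes \<sigma>: "\<sigma> \<in> {1, -1}"
  obtains C where "0 < C"
    and "\<And>t y. 1 \<le> t \<Longrightarrow> norm y < 1/20 \<Longrightarrow>
      C * t powr (-2) \<le> norm (invFT (multiplier \<sigma> t) (probe_point \<sigma> t 0 + y)) \<or>
      C * t powr (-2) \<le> norm (invFT (multiplier \<sigma> t) (probe_point \<sigma> t (2*pi/3) + y))"
proof -
  obtain c where "0 < c" and c: "\<And>t. 1 \<le> t \<Longrightarrow> c * t powr (-2) \<le> integral\<^sup>L lborel (Psi_t t)"
    using integral_Psi_t_lower_bound by blast
  define k where "k = (2 * pi) powr (-3/2) * exp (-1/2) / 8"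
  have "0 < k"
    by (simp add: k_def)
  show thesis
  proof (rule that)
    show "0 < k / 2 * c"
      using \<open>0 < k\<close> \<open>0 < c\<close> by simp
    fix t :: real and y :: "real^3"
    assume t: "1 \<le> t" and y: "norm y < 1/20"
    have "2 * (k / 2 * c * t powr (-2)) \<le> k * integral\<^sup>L lborel (Psi_t t)"
      using mult_left_mono[OF c[OF t], of k] \<open>0 < k\<close> by (simp add: mult.assoc)
    also have "\<dots> \<le> norm (invFT (multiplier \<sigma> t) (probe_point \<sigma> t 0 + y)) +
        norm (invFT (multiplier \<sigma> t) (probe_point \<sigma> t (2*pi/3) + y))"
      using norm_invFT_probe_points_ge[OF t \<sigma>] y by (simp add: k_def)
    finally show "k / 2 * c * t powr (-2) \<le> norm (invFT (multiplier \<sigma> t) (probe_point \<sigma> t 0 + y)) \<or>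
        k / 2 * c * t powr (-2) \<le> norm (invFT (multiplier \<sigma> t) (probe_point \<sigma> t (2*pi/3) + y))"
      by linarith
  qed
qed

end

theorem proposition3p4:
  fixes Psi :: "real^3 \<Rightarrow> real"
  assumes smooth: "smooth_fun Psi"
    and cpt: "compact (tsupp Psi)"
    and nonneg: "\<And>\<xi>. Psi \<xi> \<ge> 0"
    and nonzero: "\<exists>\<xi>. Psi \<xi> \<noteq> 0"
    and even: "\<And>\<xi>. Psi (- \<xi>) = Psi \<xi>"
    and supp: "tsupp Psi \<subseteq> {\<xi>. 1/2 < norm \<xi> \<and> norm \<xi> < 1 \<and> \<bar>\<xi>$1\<bar> \<ge> 1/2}"
  shows "\<forall>\<sigma>\<in>{1, -1::real}. \<exists>C>0. \<forall>\<^sub>F t in at_top.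
     Linf_norm (invFT (\<lambda>\<xi>. exp (complex_of_real t * lam \<sigma> \<xi>) *
                             complex_of_real (Psi (sqrt t *\<^sub>R aniso t \<xi>))))
       \<ge> ereal (C * t powr (-2))"
proof
  fix \<sigma> :: real
  assume \<sigma>: "\<sigma> \<in> {1, -1}"
  interpret annular_bump Psi
    using smooth_fun_imp_continuous[OF smooth] nonneg nonzero even supp by unfold_locales auto
  obtain C where "0 < C" and C: "\<And>t y. 1 \<le> t \<Longrightarrow> norm y < 1/20 \<Longrightarrow>
      C * t powr (-2) \<le> norm (invFT (multiplier \<sigma> t) (probe_point \<sigma> t 0 + y)) \<or>
      C * t powr (-2) \<le> norm (invFT (multiplier \<sigma> t) (probe_point \<sigma> t (2*pi/3) + y))"
    using invFT_multiplier_lower_bound[OF \<sigma>] by blast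
  have "ereal (C * t powr (-2)) \<le> Linf_norm (invFT (multiplier \<sigma> t))" if "1 \<le> t" for t
    unfolding Linf_norm_def using C[OF that] by (intro esssup_ge_if_two_translates_ge[of "1/20"]) auto
  then show "\<exists>C>0. \<forall>\<^sub>F t in at_top.
      Linf_norm (invFT (\<lambda>\<xi>. exp (complex_of_real t * lam \<sigma> \<xi>) * complex_of_real (Psi (sqrt t *\<^sub>R aniso t \<xi>))))
        \<ge> ereal (C * t powr (-2))"
    using \<open>0 < C\<close> unfolding multiplier_def Psi_t_def
    by (intro exI[of _ C] conjI eventually_at_top_linorderI[of 1]) auto
qed

end
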